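(* For all histories $\vec\delta,\vec\gamma,\vec\delta',\vec\gamma'$ and all $\rho,\sigma$: if $\langle\vec\delta,\rho\rangle$ is compliant with $\langle\vec\gamma,\sigma\rangle$, then $\langle\vec\delta':\vec\delta,\rho\rangle$ is compliant with $\langle\vec\gamma':\vec\gamma,\sigma\rangle$, where $\vec\delta':\vec\delta$ denotes the stack obtained by placing $\vec\delta$ on top of $\vec\delta'$ (concatenation with $\vec\delta'$ at the bottom), and similarly for $\vec\gamma':\vec\gamma$.
   Context: Let $\mathcal N$ be a countable set of names and $\overline{\mathcal N}=\{\bar a\mid a\in\mathcal N\}$ a disjoint set of conames; $\alpha$ ranges over $\mathcal N\cup\overline{\mathcal N}$, with $\bar{\bar a}=a$. Retractable contracts are the closed expressions generated by $\sigma ::= \mathbf 1 \mid \sum_{i\in I} a_i.\sigma_i \ (\text{input}) \mid \sum_{i\in I}\bar a_i.\sigma_i\ (\text{retractable output}) \mid \bigoplus_{i\in I}\bar a_i.\sigma_i\ (\text{unretractable output}) \mid x \mid \mathsf{rec}\,x.\sigma$, where $I$ is non-empty and finite, names/conames in each choice are pairwise distinct, and $\sigma$ is not a variable in $\mathsf{rec}\,x.\sigma$. Choices are commutative; $\mathsf{rec}\,x.\sigma$ is identified with $\sigma[\mathsf{rec}\,x.\sigma/x]$. A unary $\bar a.\sigma$ may be read as either kind of output. Histories are stacks $\vec\gamma ::= [\,] \mid \vec\gamma:\sigma$ with $\sigma$ a retractable contract or the special symbol $\circ$ (the last element pushed is the top). A contract with history is a pair $\langle\vec\gamma,\sigma\rangle$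 with $\sigma$ a contract or $\circ$. Transitions: $\langle\vec\gamma,\alpha.\sigma+\sigma'\rangle\xrightarrow{\alpha}\langle\vec\gamma:\sigma',\sigma\rangle$ (for retractable choices, $+$ being input or retractable output sum); $\langle\vec\gamma,\bar a.\sigma\oplus\sigma'\rangle\xrightarrow{\tau}\langle\vec\gamma,\bar a.\sigma\rangle$; $\langle\vec\gamma,\alpha.\sigma\rangle\xrightarrow{\alpha}\langle\vec\gamma:\circ,\sigma\rangle$; $\langle\vec\gamma:\sigma',\sigma\rangle\xrightarrow{\mathsf{rb}}\langle\vec\gamma,\sigma'\rangle$. Client/server pairs $\langle\vec\delta,\rho\rangle\parallel\langle\vec\gamma,\sigma\rangle$ reduce by: (comm) if $\langle\vec\delta,\rho\rangle\xrightarrow{\alpha}\langle\vec\delta',\rho'\rangle$ and $\langle\vec\gamma,\sigma\rangle\xrightarrow{\bar\alpha}\langle\vec\gamma',\sigma'\rangle$ then the pair reduces to $\langle\vec\delta',\rho'\rangle\parallel\langle\vec\gamma',\sigma'\rangle$; ($\tau$) a $\tau$-transition of either component alone; (rbk) if both components do an $\mathsf{rb}$ transition and $\rho\neq\mathbf 1$, both roll back simultaneously; rule (rbk) applies only if neither (comm) nor ($\tau$) applies. Then $\langle\vec\delta,\rho\rangle$ is compliant with $\langle\vec\gamma,\sigma\rangle$ if whenever $\langle\vec\delta,\rho\rangle\parallel\langle\vec\gamma,\sigma\rangle$ reduces in finitely many steps to a pair $\langle\vec\delta'',\rho'\rangle\parallel\langle\vec\gamma'',\sigma'\rangle$ with no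 further reduction, we have $\rho'=\mathbf 1$. *)

theory Defs
  imports Main "HOL-Library.Countable"
begin

text \<open>Kinds of choices: input sum, retractable output sum, unretractable output sum.\<close>
datatype kind = KIn | KROut | KUOut

text \<open>Raw syntax of retractable contracts (variables are natural numbers).
  A choice is a list of (name, continuation) pairs; the order is irrelevant
  for the semantics below (commutativity of choices).\<close>
datatype 'n ctr =
    One
  | Ch kind "('n \<times> 'n ctr) list"
  | Var nat
  | Rec nat "'n ctr"

primrec fv :: "'n ctr \<Rightarrow> nat set" where
  "fv One = {}"
| "fv (Ch k bs) = \<Union> (snd ` set (map (map_prod id fv) bs))"
| "fv (Var x) = {x}"
| "fv (Rec x s) = fv s - {x}"

primrec is_var :: "'n ctr \<Rightarrow> bool" where
  "is_var One = False"
| "is_var (Ch k bs) = False"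
| "is_var (Var x) = True"
| "is_var (Rec x s) = False"

primrec wf_syn :: "'n ctr \<Rightarrow> bool" where
  "wf_syn One = True"
| "wf_syn (Ch k bs) = (bs \<noteq> [] \<and> distinct (map fst bs) \<and> (\<forall>p \<in> set (map (map_prod id wf_syn) bs). snd p))"
| "wf_syn (Var x) = True"
| "wf_syn (Rec x s) = (\<not> is_var s \<and> wf_syn s)"

definition contract :: "'n ctr \<Rightarrow> bool" where
  "contract t \<longleftrightarrow> wf_syn t \<and> fv t = {}"

primrec subst :: "nat \<Rightarrow> 'n ctr \<Rightarrow> 'n ctr \<Rightarrow> 'n ctr" where
  "subst x r One = One"
| "subst x r (Ch k bs) = Ch k (map (map_prod id (subst x r)) bs)"
| "subst x r (Var y) = (if x = y then r else Var y)"
| "subst x r (Rec y s) = (if x = y then Rec y s else Rec y (subst x r s))"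

text \<open>Being equal to \<open>1\<close> up to the identification rec x.s = s[rec x.s/x].\<close>
inductive is_one :: "'n ctr \<Rightarrow> bool" where
  "is_one One"
| "is_one (subst x (Rec x s) s) \<Longrightarrow> is_one (Rec x s)"

datatype 'n cst = Circ | C "'n ctr"

type_synonym 'n history = "'n cst list"  \<comment> \<open>last element = top of the stack\<close>
type_synonym 'n hconf = "'n history \<times> 'n cst"

datatype 'n act = In 'n | Out 'n

primrec dual :: "'n act \<Rightarrow> 'n act" where
  "dual (In a) = Out a"
| "dual (Out a) = In a"

datatype 'n lab = Act "'n act" | Tau | Rb

primrec kact :: "kind \<Rightarrow> 'n \<Rightarrow> 'n act" where
  "kact KIn a = In a"
| "kact KROut a = Out a"
| "kact KUOut a = Out a"

inductive hstep :: "'n hconf \<Rightarrow> 'n lab \<Rightarrow> 'n hconf \<Rightarrow> bool" where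
  retract: "\<lbrakk> k \<noteq> KUOut; (a, s) \<in> set bs; length bs \<ge> 2 \<rbrakk> \<Longrightarrow>
     hstep (h, C (Ch k bs)) (Act (kact k a)) (h @ [C (Ch k (remove1 (a, s) bs))], C s)"
| intchoice: "\<lbrakk> (a, s) \<in> set bs; length bs \<ge> 2 \<rbrakk> \<Longrightarrow>
     hstep (h, C (Ch KUOut bs)) Tau (h, C (Ch KUOut [(a, s)]))"
| prefix: "hstep (h, C (Ch k [(a, s)])) (Act (kact k a)) (h @ [Circ], C s)"
| unfold: "hstep (h, C (subst x (Rec x s) s)) l c \<Longrightarrow> hstep (h, C (Rec x s)) l c"
| rollback: "hstep (h @ [g], c) Rb (h, g)"

definition is_one_cst :: "'n cst \<Rightarrow> bool" where
  "is_one_cst c \<longleftrightarrow> (\<exists>t. c = C t \<and> is_one t)"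

definition comm_or_tau :: "'n hconf \<Rightarrow> 'n hconf \<Rightarrow> bool" where
  "comm_or_tau p q \<longleftrightarrow>
     (\<exists>\<alpha> p' q'. hstep p (Act \<alpha>) p' \<and> hstep q (Act (dual \<alpha>)) q')
   \<or> (\<exists>p'. hstep p Tau p') \<or> (\<exists>q'. hstep q Tau q')"

inductive red :: "'n hconf \<times> 'n hconf \<Rightarrow> 'n hconf \<times> 'n hconf \<Rightarrow> bool" where
  comm: "\<lbrakk> hstep p (Act \<alpha>) p'; hstep q (Act (dual \<alpha>)) q' \<rbrakk> \<Longrightarrow> red (p, q) (p', q')"
| tau_l: "hstep p Tau p' \<Longrightarrow> red (p, q) (p', q)"
| tau_r: "hstep q Tau q' \<Longrightarrow> red (p, q) (p, q')"
| rbk: "\<lbrakk> hstep p Rb p'; hstep q Rb q'; \<not> is_one_cst (snd p); \<not> comm_or_tau p q \<rbrakk>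
        \<Longrightarrow> red (p, q) (p', q')"

definition compliant :: "'n hconf \<Rightarrow> 'n hconf \<Rightarrow> bool" where
  "compliant p q \<longleftrightarrow>
     (\<forall>p' q'. red\<^sup>*\<^sup>* (p, q) (p', q') \<and> (\<nexists>r. red (p', q') r) \<longrightarrow> is_one_cst (snd p'))"

definition wf_cst :: "'n cst \<Rightarrow> bool" where
  "wf_cst c \<longleftrightarrow> (c = Circ \<or> (\<exists>t. c = C t \<and> contract t))"

definition wf_hist :: "'n history \<Rightarrow> bool" where
  "wf_hist h \<longleftrightarrow> (\<forall>c \<in> set h. wf_cst c)"

end

theory Submission
  imports Defs
begin

text \<open>Transitions only push onto or pop the top of a history, so a run of the extended pair
  \<open>\<langle>\<delta>'@\<delta>, \<rho>\<rangle> \<parallel> \<langle>\<gamma>'@\<gamma>, \<sigma>\<rangle>\<close> is a run of \<open>\<langle>\<delta>, \<rho>\<rangle> \<parallel> \<langle>\<gamma>, \<sigma>\<rangle>\<close> with \<open>\<delta>'\<close>, \<open>\<gamma>'\<close> left untouched underneath,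
  and conversely. The only way to reach into \<open>\<delta>'\<close> or \<open>\<gamma>'\<close> is a rollback at a point where
  one of the original histories is empty; there the original pair is stuck with a client
  different from \<open>1\<close>, which compliance excludes. Hence both pairs have the same stuck states
  up to the prefixes, and compliance transfers.\<close>

lemma hstep_Rb_history:
  assumes "hstep p Rb q"
  shows "fst p = fst q @ [snd q]"
proof -
  have "l = Rb \<Longrightarrow> fst p = fst q @ [snd q]" if "hstep p l q" for l
    using that by induction auto
  with assms show ?thesis by blast
qed

lemma hstep_non_Rb_history:
  "hstep p l q \<Longrightarrow> l \<noteq> Rb \<Longrightarrow>
    \<exists>xs. fst q = fst p @ xs \<and> (\<forall>h. hstep (h, snd p) l (h @ xs, snd q))"
proof (induction rule: hstep.induct)
  case (retract k a s bs h)
  then show ?case by (auto intro: hstep.retract)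
next
  case (intchoice a s bs h)
  then show ?case by (auto intro: hstep.intchoice)
next
  case (prefix h k a s)
  then show ?case by (auto intro: hstep.prefix)
next
  case (unfold h x s l c)
  then show ?case by (auto intro: hstep.unfold)
qed simp

lemma hstep_prepend_history:
  assumes "hstep (h, c) l (h', c')"
  shows "hstep (d @ h, c) l (d @ h', c')"
proof (cases "l = Rb")
  case True
  from hstep_Rb_history[OF assms[unfolded True]] have "h = h' @ [c']" by simp
  then show ?thesis unfolding True using hstep.rollback[of "d @ h'" c' c] by simp
next
  case False
  from hstep_non_Rb_history[OF assms False] obtain xs
    where "h' = h @ xs" "\<forall>h0. hstep (h0, c) l (h0 @ xs, c')" by auto
  then show ?thesis by (metis append.assoc)
qed

lemma hstep_strip_history:
  assumes "hstep (d @ h, c) l q" "l \<noteq> Rb"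
  obtains h' where "q = (d @ h', snd q)" "hstep (h, c) l (h', snd q)"
proof -
  from hstep_non_Rb_history[OF assms] obtain xs
    where "fst q = d @ h @ xs" "\<forall>h0. hstep (h0, c) l (h0 @ xs, snd q)" by auto
  then show ?thesis by (intro that[of "h @ xs"]) (auto simp: prod_eq_iff)
qed

lemma comm_or_tau_prepend_history_iff:
  "comm_or_tau (d @ h1, c1) (e @ h2, c2) \<longleftrightarrow> comm_or_tau (h1, c1) (h2, c2)"
proof
  assume "comm_or_tau (d @ h1, c1) (e @ h2, c2)"
  then show "comm_or_tau (h1, c1) (h2, c2)"
    unfolding comm_or_tau_def
    by (elim disjE exE conjE) (blast elim: hstep_strip_history)+
next
  assume "comm_or_tau (h1, c1) (h2, c2)"
  then show "comm_or_tau (d @ h1, c1) (e @ h2, c2)"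
    unfolding comm_or_tau_def by (metis hstep_prepend_history prod.collapse)
qed

lemma red_prepend_history:
  assumes "red ((h1, c1), (h2, c2)) ((h1', c1'), (h2', c2'))"
  shows "red ((d @ h1, c1), (e @ h2, c2)) ((d @ h1', c1'), (e @ h2', c2'))"
  using assms
proof (cases rule: red.cases)
  case comm
  then show ?thesis by (auto intro: red.comm hstep_prepend_history)
next
  case tau_l
  then show ?thesis by (auto intro: red.tau_l hstep_prepend_history)
next
  case tau_r
  then show ?thesis by (auto intro: red.tau_r hstep_prepend_history)
next
  case rbk
  then show ?thesis
    by (auto intro!: red.rbk hstep_prepend_history simp: comm_or_tau_prepend_history_iff)
qed

lemma red_strip_history:
  assumes red: "red ((d @ h1, c1), (e @ h2, c2)) r"
    and progress: "\<not> is_one_cst c1 \<Longrightarrow> \<exists>r'. red ((h1, c1), (h2, c2)) r'"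
  obtains h1' c1' h2' c2' where "r = ((d @ h1', c1'), (e @ h2', c2'))"
    and "red ((h1, c1), (h2, c2)) ((h1', c1'), (h2', c2'))"
  using red
proof (cases rule: red.cases)
  case (comm \<alpha> p' q')
  from comm(2) obtain a where "p' = (d @ a, snd p')" "hstep (h1, c1) (Act \<alpha>) (a, snd p')"
    by (rule hstep_strip_history) simp
  moreover from comm(3) obtain b
    where "q' = (e @ b, snd q')" "hstep (h2, c2) (Act (dual \<alpha>)) (b, snd q')"
    by (rule hstep_strip_history) simp
  ultimately show ?thesis using comm(1) by (metis red.comm that)
next
  case (tau_l p')
  from tau_l(2) obtain a where "p' = (d @ a, snd p')" "hstep (h1, c1) Tau (a, snd p')"
    by (rule hstep_strip_history) simp
  then show ?thesis using tau_l(1) by (metis red.tau_l that)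
next
  case (tau_r q')
  from tau_r(2) obtain b where "q' = (e @ b, snd q')" "hstep (h2, c2) Tau (b, snd q')"
    by (rule hstep_strip_history) simp
  then show ?thesis using tau_r(1) by (metis red.tau_r that)
next
  case (rbk p' q')
  have not_one: "\<not> is_one_cst c1" and no_cot: "\<not> comm_or_tau (h1, c1) (h2, c2)"
    using rbk(4,5) by (simp_all add: comm_or_tau_prepend_history_iff)
  \<comment> \<open>the original pair reduces, and with comm and tau excluded only by a rollback:
      neither of its histories is empty\<close>
  from progress[OF not_one] obtain r' where "red ((h1, c1), (h2, c2)) r'" ..
  then obtain h1' g1 h2' g2 where h1: "h1 = h1' @ [g1]" and h2: "h2 = h2' @ [g2]"
  proof (cases rule: red.cases)
    case (rbk p'' q'')
    then show ?thesis using hstep_Rb_history[OF rbk(2)] hstep_Rb_history[OF rbk(3)] that by simp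
  qed (use no_cot in \<open>force simp: comm_or_tau_def\<close>)+
  have "p' = (d @ h1', g1)" "q' = (e @ h2', g2)"
    using hstep_Rb_history[OF rbk(2)] hstep_Rb_history[OF rbk(3)] h1 h2 by (auto simp: prod_eq_iff)
  moreover have "red ((h1, c1), (h2, c2)) ((h1', g1), (h2', g2))"
    unfolding h1 h2 using not_one no_cot[unfolded h1 h2]
    by (intro red.rbk hstep.rollback) simp_all
  ultimately show ?thesis using rbk(1) that by simp
qed

lemma compliant_reachable_strip_history:
  assumes compl: "compliant (h1, c1) (h2, c2)"
    and "red\<^sup>*\<^sup>* ((d @ h1, c1), (e @ h2, c2)) r"
  shows "\<exists>h1' c1' h2' c2'. r = ((d @ h1', c1'), (e @ h2', c2'))
           \<and> red\<^sup>*\<^sup>* ((h1, c1), (h2, c2)) ((h1', c1'), (h2', c2'))"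
  using assms(2)
proof (induction rule: rtranclp_induct)
  case (step y z)
  then obtain h1' c1' h2' c2' where y: "y = ((d @ h1', c1'), (e @ h2', c2'))"
    and reach: "red\<^sup>*\<^sup>* ((h1, c1), (h2, c2)) ((h1', c1'), (h2', c2'))" by blast
  have "\<exists>r'. red ((h1', c1'), (h2', c2')) r'" if "\<not> is_one_cst c1'"
    using compl reach that unfolding compliant_def by fastforce
  with step.hyps(2)[unfolded y] obtain h1'' c1'' h2'' c2''
    where "z = ((d @ h1'', c1''), (e @ h2'', c2''))"
      and "red ((h1', c1'), (h2', c2')) ((h1'', c1''), (h2'', c2''))"
    by (rule red_strip_history)
  with reach show ?case by (blast intro: rtranclp.rtrancl_into_rtrancl)
qed blast

lemma compliant_prepend_history:
  assumes compl: "compliant (h1, c1) (h2, c2)"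
  shows "compliant (d @ h1, c1) (e @ h2, c2)"
  unfolding compliant_def
proof (intro allI impI, elim conjE)
  fix p q
  assume "red\<^sup>*\<^sup>* ((d @ h1, c1), (e @ h2, c2)) (p, q)" and stuck: "\<nexists>r. red (p, q) r"
  then obtain h1' c1' h2' c2' where pq: "p = (d @ h1', c1')" "q = (e @ h2', c2')"
    and reach: "red\<^sup>*\<^sup>* ((h1, c1), (h2, c2)) ((h1', c1'), (h2', c2'))"
    using compliant_reachable_strip_history[OF compl] by blast
  have "\<nexists>r. red ((h1', c1'), (h2', c2')) r"
    using stuck red_prepend_history[of h1' c1' h2' c2' _ _ _ _ d e] unfolding pq
    by (metis prod.collapse)
  with compl reach show "is_one_cst (snd p)"
    unfolding compliant_def pq by auto
qed

theorem lemma3: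
  fixes \<delta> \<gamma> \<delta>' \<gamma>' :: "'n::countable history" and \<rho> \<sigma> :: "'n cst"
  assumes "wf_hist \<delta>" and "wf_hist \<gamma>" and "wf_hist \<delta>'" and "wf_hist \<gamma>'"
    and "wf_cst \<rho>" and "wf_cst \<sigma>"
    and "compliant (\<delta>, \<rho>) (\<gamma>, \<sigma>)"
  shows "compliant (\<delta>' @ \<delta>, \<rho>) (\<gamma>' @ \<gamma>, \<sigma>)"
  using assms(7) by (rule compliant_prepend_history)

end
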